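(* Let $G$ be a compact Hausdorff topological group, $p\colon E\to B$ a $G$-map of Hausdorff $G$-spaces, and suppose $E$ is $G$-contractible. If either ($B$ is $G$-connected and $E^G\neq\emptyset$) or ($p(E^H)=B^H$ for all closed subgroups $H$ of $G$), then $\mathrm{secat}_G(p)=\mathrm{cat}_G(B)$.
   Context: $X^H=\{x: hx=x\ \forall h\in H\}$; $X$ is $G$-connected if $X^H$ is path-connected for every closed subgroup $H$. A $G$-homotopy is an equivariant homotopy with trivial action on $I$. An invariant set is $G$-categorical if its inclusion is $G$-homotopic to a map into a single orbit; $\mathrm{cat}_G(X)$ is the least number of open $G$-categorical sets covering $X$; $X$ is $G$-contractible if $\mathrm{cat}_G(X)=1$. $\mathrm{secat}_G(p)$ is the least $k$ such that $B$ is covered by $k$ invariant open sets $U_i$ each admitting a $G$-map $s\colon U_i\to E$ with $ps$ $G$-homotopic to the inclusion ($\infty$ if none). *)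

theory Defs
  imports "HOL-Analysis.Analysis" "HOL-Algebra.Group"
begin

definition topological_group :: "'g monoid \<Rightarrow> 'g topology \<Rightarrow> bool" where
  "topological_group G TG \<longleftrightarrow> group G \<and> topspace TG = carrier G
     \<and> continuous_map (prod_topology TG TG) TG (\<lambda>(x,y). x \<otimes>\<^bsub>G\<^esub> y)
     \<and> continuous_map TG TG (\<lambda>x. inv\<^bsub>G\<^esub> x)"

definition compact_Hausdorff_group :: "'g monoid \<Rightarrow> 'g topology \<Rightarrow> bool" where
  "compact_Hausdorff_group G TG \<longleftrightarrow> topological_group G TG \<and> compact_space TG \<and> Hausdorff_space TG"

definition G_space :: "'g monoid \<Rightarrow> 'g topology \<Rightarrow> 'x topology \<Rightarrow> ('g \<Rightarrow> 'x \<Rightarrow> 'x) \<Rightarrow> bool" where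
  "G_space G TG X a \<longleftrightarrow> continuous_map (prod_topology TG X) X (\<lambda>(g,x). a g x)
     \<and> (\<forall>x\<in>topspace X. a \<one>\<^bsub>G\<^esub> x = x)
     \<and> (\<forall>g\<in>carrier G. \<forall>h\<in>carrier G. \<forall>x\<in>topspace X. a (g \<otimes>\<^bsub>G\<^esub> h) x = a g (a h x))"

definition equivariant :: "'g monoid \<Rightarrow> 'x topology \<Rightarrow> ('g \<Rightarrow> 'x \<Rightarrow> 'x) \<Rightarrow> ('g \<Rightarrow> 'y \<Rightarrow> 'y) \<Rightarrow> ('x \<Rightarrow> 'y) \<Rightarrow> bool" where
  "equivariant G X a b f \<longleftrightarrow> (\<forall>g\<in>carrier G. \<forall>x\<in>topspace X. f (a g x) = b g (f x))"

definition G_map :: "'g monoid \<Rightarrow> 'x topology \<Rightarrow> ('g \<Rightarrow> 'x \<Rightarrow> 'x) \<Rightarrow> 'y topology \<Rightarrow> ('g \<Rightarrow> 'y \<Rightarrow> 'y) \<Rightarrow> ('x \<Rightarrow> 'y) \<Rightarrow> bool" where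
  "G_map G X a Y b f \<longleftrightarrow> continuous_map X Y f \<and> equivariant G X a b f"

text \<open>G-homotopy: a homotopy (parameter space [0,1] with trivial action) all of whose
 stages are equivariant.\<close>
definition G_homotopic :: "'g monoid \<Rightarrow> 'x topology \<Rightarrow> ('g \<Rightarrow> 'x \<Rightarrow> 'x) \<Rightarrow> 'y topology \<Rightarrow> ('g \<Rightarrow> 'y \<Rightarrow> 'y) \<Rightarrow> ('x \<Rightarrow> 'y) \<Rightarrow> ('x \<Rightarrow> 'y) \<Rightarrow> bool" where
  "G_homotopic G X a Y b f f' \<longleftrightarrow> homotopic_with (equivariant G X a b) X Y f f'"

definition invariant_set :: "'g monoid \<Rightarrow> 'x topology \<Rightarrow> ('g \<Rightarrow> 'x \<Rightarrow> 'x) \<Rightarrow> 'x set \<Rightarrow> bool" where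
  "invariant_set G X a U \<longleftrightarrow> U \<subseteq> topspace X \<and> (\<forall>g\<in>carrier G. \<forall>x\<in>U. a g x \<in> U)"

definition G_orbit :: "'g monoid \<Rightarrow> ('g \<Rightarrow> 'x \<Rightarrow> 'x) \<Rightarrow> 'x \<Rightarrow> 'x set" where
  "G_orbit G a x = {a g x | g. g \<in> carrier G}"

definition fixed_set :: "'x topology \<Rightarrow> ('g \<Rightarrow> 'x \<Rightarrow> 'x) \<Rightarrow> 'g set \<Rightarrow> 'x set" where
  "fixed_set X a H = {x \<in> topspace X. \<forall>h\<in>H. a h x = x}"

definition closed_subgroup :: "'g monoid \<Rightarrow> 'g topology \<Rightarrow> 'g set \<Rightarrow> bool" where
  "closed_subgroup G TG H \<longleftrightarrow> subgroup H G \<and> closedin TG H"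

definition G_connected :: "'g monoid \<Rightarrow> 'g topology \<Rightarrow> 'x topology \<Rightarrow> ('g \<Rightarrow> 'x \<Rightarrow> 'x) \<Rightarrow> bool" where
  "G_connected G TG X a \<longleftrightarrow> (\<forall>H. closed_subgroup G TG H \<longrightarrow> path_connectedin X (fixed_set X a H))"

definition G_categorical :: "'g monoid \<Rightarrow> 'x topology \<Rightarrow> ('g \<Rightarrow> 'x \<Rightarrow> 'x) \<Rightarrow> 'x set \<Rightarrow> bool" where
  "G_categorical G X a U \<longleftrightarrow> invariant_set G X a U \<and>
     (\<exists>c x0. x0 \<in> topspace X \<and> c ` U \<subseteq> G_orbit G a x0 \<and>
        G_homotopic G (subtopology X U) a X a id c)"

text \<open>Equivariant LS category (\<infinity> if no finite cover exists).\<close>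
definition G_cat :: "'g monoid \<Rightarrow> 'x topology \<Rightarrow> ('g \<Rightarrow> 'x \<Rightarrow> 'x) \<Rightarrow> enat" where
  "G_cat G X a = Inf {enat k | k. \<exists>U :: nat \<Rightarrow> 'x set.
      (\<forall>i<k. openin X (U i) \<and> G_categorical G X a (U i)) \<and> topspace X = (\<Union>i<k. U i)}"

definition G_secat :: "'g monoid \<Rightarrow> 'e topology \<Rightarrow> ('g \<Rightarrow> 'e \<Rightarrow> 'e) \<Rightarrow> 'b topology \<Rightarrow> ('g \<Rightarrow> 'b \<Rightarrow> 'b) \<Rightarrow> ('e \<Rightarrow> 'b) \<Rightarrow> enat" where
  "G_secat G E aE B aB p = Inf {enat k | k. \<exists>U :: nat \<Rightarrow> 'b set.
      (\<forall>i<k. openin B (U i) \<and> invariant_set G B aB (U i) \<and>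
         (\<exists>s. G_map G (subtopology B (U i)) aB E aE s \<and>
              G_homotopic G (subtopology B (U i)) aB B aB (p \<circ> s) id))
      \<and> topspace B = (\<Union>i<k. U i)}"

end

theory Submission
  imports Defs
begin

text \<open>Both invariants count open invariant covers, and the two kinds of admissible sets agree.
  If \<open>E\<close> is \<open>G\<close>-contractible, a local \<open>G\<close>-section \<open>s\<close> over \<open>U\<close> makes \<open>U\<close> \<open>G\<close>-categorical:
  compose \<open>p \<circ> s \<simeq> id\<close> with a contraction of \<open>E\<close> into an orbit. Conversely, let \<open>U\<close> be
  \<open>G\<close>-deformed into the orbit \<open>G x0\<close>, and let \<open>H\<close> be the stabiliser of \<open>x0\<close>. As \<open>G\<close> is compact,
  \<open>g \<mapsto> g x0\<close> is a quotient map, so any point \<open>y\<close> fixed by \<open>H\<close> yields a \<open>G\<close>-map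
  \<open>g x0 \<mapsto> g y\<close> out of the orbit (and likewise for a path of such points). If \<open>x0\<close> lifts to
  \<open>y0 \<in> E^H\<close>, this gives a section over the orbit, hence over \<open>U\<close>. If \<open>B^H\<close> is path-connected
  and \<open>e0 \<in> E^G\<close>, a path from \<open>x0\<close> to \<open>p e0\<close> in \<open>B^H\<close> yields a \<open>G\<close>-homotopy from the orbit to
  the constant \<open>p e0\<close>, so the constant map \<open>e0\<close> is a section over \<open>U\<close>.\<close>

lemma continuous_map_through_quotient:
  assumes "compact_space K" "Hausdorff_space Y" "continuous_map K Y q" "q ` topspace K = topspace Y"
    and "continuous_map K Z g" "\<And>k. k \<in> topspace K \<Longrightarrow> f (q k) = g k"
  shows "continuous_map Y Z f"
proof -
  have "quotient_map K Y q" using continuous_imp_quotient_map assms by blast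
  moreover have "continuous_map K Z (f \<circ> q)" using continuous_map_eq[OF assms(5)] assms(6) by force
  ultimately show ?thesis using continuous_compose_quotient_map by blast
qed

subsection \<open>Equivariant maps and homotopies\<close>

lemma G_space_continuous_action:
  assumes "G_space G TG X a" "continuous_map Z TG f" "continuous_map Z X g"
  shows "continuous_map Z X (\<lambda>z. a (f z) (g z))"
proof -
  have "continuous_map (prod_topology TG X) X (\<lambda>(g, x). a g x)" using assms(1) G_space_def by blast
  from continuous_map_compose[OF continuous_map_pairedI[OF assms(2,3)] this]
  show ?thesis by (simp add: o_def)
qed

lemma G_space_act_one: "G_space G TG X a \<Longrightarrow> x \<in> topspace X \<Longrightarrow> a \<one>\<^bsub>G\<^esub> x = x"
  unfolding G_space_def by blast

lemma G_space_act_mult: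
  "G_space G TG X a \<Longrightarrow> g \<in> carrier G \<Longrightarrow> h \<in> carrier G \<Longrightarrow> x \<in> topspace X
    \<Longrightarrow> a (g \<otimes>\<^bsub>G\<^esub> h) x = a g (a h x)"
  unfolding G_space_def by blast

lemma G_space_act_in_topspace:
  assumes "G_space G TG X a" "topspace TG = carrier G" "g \<in> carrier G" "x \<in> topspace X"
  shows "a g x \<in> topspace X"
proof -
  have "continuous_map (prod_topology TG X) X (\<lambda>(g, x). a g x)" using assms(1) G_space_def by blast
  then have "(\<lambda>(g, x). a g x) (g, x) \<in> topspace X"
    by (rule continuous_map_image_subset_topspace[THEN subsetD]) (use assms in auto)
  then show ?thesis by simp
qed

lemma equivariant_compose:
  assumes "equivariant G X a b f" "equivariant G Y b c g" "f ` topspace X \<subseteq> topspace Y"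
  shows "equivariant G X a c (g \<circ> f)"
  using assms unfolding equivariant_def by (simp add: image_subset_iff)

lemma equivariant_cong:
  assumes "equivariant G X a b f" "\<And>x. x \<in> topspace X \<Longrightarrow> f' x = f x"
    and "\<And>g x. g \<in> carrier G \<Longrightarrow> x \<in> topspace X \<Longrightarrow> a g x \<in> topspace X"
  shows "equivariant G X a b f'"
  using assms unfolding equivariant_def by auto

lemma G_map_compose:
  assumes "G_map G X a Y b f" "G_map G Y b Z c g"
  shows "G_map G X a Z c (g \<circ> f)"
proof -
  have f: "continuous_map X Y f" "equivariant G X a b f"
    and g: "continuous_map Y Z g" "equivariant G Y b c g"
    using assms unfolding G_map_def by auto
  show ?thesis
    unfolding G_map_def
    using continuous_map_compose[OF f(1) g(1)]
      equivariant_compose[OF f(2) g(2) continuous_map_image_subset_topspace[OF f(1)]] by simp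
qed

lemma G_homotopic_compose_right:
  assumes "G_homotopic G Y b Z c f f'" "G_map G X a Y b h"
  shows "G_homotopic G X a Z c (f \<circ> h) (f' \<circ> h)"
proof -
  have "continuous_map X Y h" "equivariant G X a b h" using assms(2) unfolding G_map_def by auto
  then show ?thesis
    using assms(1) unfolding G_homotopic_def
    by (auto intro!: homotopic_with_compose_continuous_map_right equivariant_compose
        continuous_map_image_subset_topspace)
qed

lemma G_homotopic_compose_left:
  assumes "G_homotopic G X a Y b f f'" "G_map G Y b Z c h"
  shows "G_homotopic G X a Z c (h \<circ> f) (h \<circ> f')"
proof -
  have "homotopic_with (\<lambda>j. continuous_map X Y j \<and> equivariant G X a b j) X Y f f'"
    using assms(1) unfolding G_homotopic_def by (rule homotopic_with_mono) auto
  moreover have "continuous_map Y Z h" "equivariant G Y b c h" using assms(2) unfolding G_map_def by auto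
  ultimately show ?thesis
    unfolding G_homotopic_def
    by (auto intro!: homotopic_with_compose_continuous_map_left equivariant_compose
        continuous_map_image_subset_topspace)
qed

lemma G_homotopic_sym: "G_homotopic G X a Y b f g \<Longrightarrow> G_homotopic G X a Y b g f"
  unfolding G_homotopic_def by (rule homotopic_with_symD)

lemma G_homotopic_trans:
  "G_homotopic G X a Y b f g \<Longrightarrow> G_homotopic G X a Y b g h \<Longrightarrow> G_homotopic G X a Y b f h"
  unfolding G_homotopic_def by (rule homotopic_with_trans)

lemma topspace_subtopology_invariant_set:
  "invariant_set G X a U \<Longrightarrow> topspace (subtopology X U) = U"
  unfolding invariant_set_def by auto

lemma image_G_orbit:
  assumes "equivariant G X a b p" "x \<in> topspace X"
  shows "p ` G_orbit G a x = G_orbit G b (p x)"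
proof -
  have "p (a g x) = b g (p x)" if "g \<in> carrier G" for g
    using assms that unfolding equivariant_def by blast
  then show ?thesis unfolding G_orbit_def by (auto simp: image_iff) (metis)
qed

lemma G_categorical_obtains_orbit_map:
  assumes "G_categorical G X a U"
  obtains c x0 where "x0 \<in> topspace X" "c ` U \<subseteq> G_orbit G a x0"
    "G_homotopic G (subtopology X U) a X a id c"
    "G_map G (subtopology X U) a (subtopology X (G_orbit G a x0)) a c"
proof -
  obtain c x0 where x0: "x0 \<in> topspace X" and c: "c ` U \<subseteq> G_orbit G a x0"
    and hom: "G_homotopic G (subtopology X U) a X a id c" and U: "invariant_set G X a U"
    using assms unfolding G_categorical_def by blast
  have "continuous_map (subtopology X U) X c" "equivariant G (subtopology X U) a a c"
    using homotopic_with_imp_continuous_maps homotopic_with_imp_property hom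
    unfolding G_homotopic_def by blast+
  then have "G_map G (subtopology X U) a (subtopology X (G_orbit G a x0)) a c"
    using c topspace_subtopology_invariant_set[OF U]
    unfolding G_map_def by (auto simp: continuous_map_in_subtopology)
  then show thesis using that x0 c hom by blast
qed

subsection \<open>Local equivariant sections\<close>

definition has_G_local_section ::
    "'g monoid \<Rightarrow> 'e topology \<Rightarrow> ('g \<Rightarrow> 'e \<Rightarrow> 'e) \<Rightarrow> 'b topology \<Rightarrow> ('g \<Rightarrow> 'b \<Rightarrow> 'b)
      \<Rightarrow> ('e \<Rightarrow> 'b) \<Rightarrow> 'b set \<Rightarrow> bool" where
  "has_G_local_section G E aE B aB p U \<longleftrightarrow> invariant_set G B aB U \<and>
     (\<exists>s. G_map G (subtopology B U) aB E aE s \<and> G_homotopic G (subtopology B U) aB B aB (p \<circ> s) id)"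

lemma G_secat_eq_G_cat_if:
  assumes "\<And>V. openin B V \<Longrightarrow> has_G_local_section G E aE B aB p V \<longleftrightarrow> G_categorical G B aB V"
  shows "G_secat G E aE B aB p = G_cat G B aB"
proof -
  have "(openin B V \<and> has_G_local_section G E aE B aB p V) \<longleftrightarrow> (openin B V \<and> G_categorical G B aB V)"
    for V using assms by blast
  then show ?thesis
    unfolding G_secat_def G_cat_def has_G_local_section_def[symmetric] conj_assoc[symmetric] by simp
qed

lemma G_categorical_if_has_G_local_section:
  assumes contraction: "e0 \<in> topspace E" "c ` topspace E \<subseteq> G_orbit G aE e0" "G_homotopic G E aE E aE id c"
    and p: "G_map G E aE B aB p"
    and U: "has_G_local_section G E aE B aB p U"
  shows "G_categorical G B aB U"
proof -
  obtain s where inv: "invariant_set G B aB U" and s: "G_map G (subtopology B U) aB E aE s"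
    and ps: "G_homotopic G (subtopology B U) aB B aB (p \<circ> s) id"
    using U unfolding has_G_local_section_def by blast
  have "G_homotopic G (subtopology B U) aB B aB (p \<circ> (id \<circ> s)) (p \<circ> (c \<circ> s))"
    using G_homotopic_compose_left[OF G_homotopic_compose_right[OF contraction(3) s] p] .
  then have "G_homotopic G (subtopology B U) aB B aB id (p \<circ> c \<circ> s)"
    using G_homotopic_trans[OF G_homotopic_sym[OF ps]] by (simp add: o_assoc)
  moreover have "(p \<circ> c \<circ> s) ` U \<subseteq> G_orbit G aB (p e0)"
  proof -
    have "s ` U \<subseteq> topspace E"
      using s continuous_map_image_subset_topspace topspace_subtopology_invariant_set[OF inv]
      unfolding G_map_def by metis
    then have "(c \<circ> s) ` U \<subseteq> G_orbit G aE e0" using contraction(2) by auto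
    then show ?thesis
      using image_G_orbit[of G E aE aB p e0] p contraction(1) unfolding G_map_def by (auto simp: image_comp)
  qed
  moreover have "p e0 \<in> topspace B"
    using p contraction(1) continuous_map_image_subset_topspace unfolding G_map_def by blast
  ultimately show ?thesis using inv unfolding G_categorical_def by blast
qed

lemma G_cat_eq_1_obtains_contraction:
  assumes "G_cat G X a = 1"
  obtains c x0 where "x0 \<in> topspace X" "c ` topspace X \<subseteq> G_orbit G a x0" "G_homotopic G X a X a id c"
proof -
  define S where "S = {enat k | k. \<exists>U :: nat \<Rightarrow> _ set.
      (\<forall>i<k. openin X (U i) \<and> G_categorical G X a (U i)) \<and> topspace X = (\<Union>i<k. U i)}"
  have "Inf S = 1" using assms unfolding G_cat_def S_def by simp
  then have "S \<noteq> {}" by (auto simp: Inf_enat_def)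
  then have "enat 1 \<in> S" using wellorder_InfI \<open>Inf S = 1\<close> by (fastforce simp: one_enat_def)
  then obtain U where "G_categorical G X a (U 0)" "topspace X = U 0"
    unfolding S_def by (auto simp: lessThan_Suc)
  then show thesis
    using that unfolding G_categorical_def by (metis subtopology_topspace)
qed

subsection \<open>Equivariant maps out of an orbit\<close>

definition stabilizer :: "'g monoid \<Rightarrow> ('g \<Rightarrow> 'x \<Rightarrow> 'x) \<Rightarrow> 'x \<Rightarrow> 'g set" where
  "stabilizer G a x = {g \<in> carrier G. a g x = x}"

locale compact_group =
  fixes G :: "'g monoid" (structure) and TG :: "'g topology"
  assumes group: "group G" and topspace_TG: "topspace TG = carrier G" and compact_TG: "compact_space TG"
begin

lemma continuous_map_orbit:
  assumes "G_space G TG X a" "x0 \<in> topspace X"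
  shows "continuous_map TG X (\<lambda>g. a g x0)"
  using G_space_continuous_action[OF assms(1) continuous_map_id, of "\<lambda>_. x0"] assms(2) by simp

lemma G_orbit_subset_topspace:
  assumes "G_space G TG X a" "x0 \<in> topspace X"
  shows "G_orbit G a x0 \<subseteq> topspace X"
  unfolding G_orbit_def using G_space_act_in_topspace[OF assms(1) topspace_TG _ assms(2)] by auto

lemma invariant_set_G_orbit:
  assumes "G_space G TG X a" "x0 \<in> topspace X"
  shows "invariant_set G X a (G_orbit G a x0)"
proof -
  interpret group G by (rule group)
  have "a g (a k x0) = a (g \<otimes> k) x0" if "g \<in> carrier G" "k \<in> carrier G" for g k
    using G_space_act_mult[OF assms(1) that assms(2)] by simp
  then show ?thesis
    using G_orbit_subset_topspace[OF assms] unfolding invariant_set_def G_orbit_def by force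
qed

lemma closed_subgroup_stabilizer:
  assumes X: "G_space G TG X a" "t1_space X" "x0 \<in> topspace X"
  shows "closed_subgroup G TG (stabilizer G a x0)"
proof -
  interpret group G by (rule group)
  have "subgroup (stabilizer G a x0) G"
  proof (rule subgroupI)
    show "stabilizer G a x0 \<noteq> {}"
      using G_space_act_one[OF X(1,3)] unfolding stabilizer_def by blast
    fix g h assume "g \<in> stabilizer G a x0" "h \<in> stabilizer G a x0"
    then show "g \<otimes> h \<in> stabilizer G a x0"
      using G_space_act_mult[OF X(1) _ _ X(3)] unfolding stabilizer_def by auto
  next
    fix g assume g: "g \<in> stabilizer G a x0"
    then have "a (inv g) x0 = a (inv g) (a g x0)" unfolding stabilizer_def by simp
    also have "\<dots> = x0"
      using g G_space_act_mult[OF X(1) _ _ X(3), of "inv g" g] G_space_act_one[OF X(1,3)]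
      unfolding stabilizer_def by simp
    finally show "inv g \<in> stabilizer G a x0" using g unfolding stabilizer_def by simp
  qed (auto simp: stabilizer_def)
  moreover have "closedin TG {g \<in> topspace TG. a g x0 \<in> {x0}}"
    using closedin_continuous_map_preimage[OF continuous_map_orbit[OF X(1,3)]
        closedin_t1_singleton[OF X(2,3)]] .
  ultimately show ?thesis unfolding closed_subgroup_def stabilizer_def topspace_TG by simp
qed

lemma stabilizer_fixed_act_eq:
  assumes X: "G_space G TG X aX" "x0 \<in> topspace X" and Y: "G_space G TG Y aY" "y \<in> topspace Y"
    and fixed: "\<And>h. h \<in> stabilizer G aX x0 \<Longrightarrow> aY h y = y"
    and g: "g1 \<in> carrier G" "g2 \<in> carrier G" "aX g1 x0 = aX g2 x0"
  shows "aY g1 y = aY g2 y"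
proof -
  interpret group G by (rule group)
  have "aX (inv g1 \<otimes> g2) x0 = aX (inv g1) (aX g1 x0)"
    using g G_space_act_mult[OF X(1) _ _ X(2)] by simp
  also have "\<dots> = x0"
    using g G_space_act_mult[OF X(1) _ _ X(2), of "inv g1" g1] G_space_act_one[OF X] by simp
  finally have "inv g1 \<otimes> g2 \<in> stabilizer G aX x0"
    using g unfolding stabilizer_def by simp
  then have "aY g2 y = aY g1 (aY (inv g1 \<otimes> g2) y)"
    using g G_space_act_mult[OF Y(1) _ _ Y(2), of g1 "inv g1 \<otimes> g2"] by (simp add: m_assoc[symmetric])
  then show ?thesis using fixed \<open>inv g1 \<otimes> g2 \<in> stabilizer G aX x0\<close> by simp
qed

lemma orbit_extension:
  assumes X: "G_space G TG X aX" "Hausdorff_space X" "x0 \<in> topspace X"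
    and Y: "G_space G TG Y aY"
    and Z: "compact_space Z" "Hausdorff_space Z" "continuous_map Z Y f"
    and fixed: "\<And>z h. z \<in> topspace Z \<Longrightarrow> h \<in> stabilizer G aX x0 \<Longrightarrow> aY h (f z) = f z"
  obtains F where "continuous_map (prod_topology Z (subtopology X (G_orbit G aX x0))) Y F"
    "\<And>z g. z \<in> topspace Z \<Longrightarrow> g \<in> carrier G \<Longrightarrow> F (z, aX g x0) = aY g (f z)"
proof -
  define rep where "rep x = (SOME g. g \<in> carrier G \<and> aX g x0 = x)" for x
  define F where "F w = aY (rep (snd w)) (f (fst w))" for w
  have F: "F (z, aX g x0) = aY g (f z)" if z: "z \<in> topspace Z" and g: "g \<in> carrier G" for z g
  proof -
    have "rep (aX g x0) \<in> carrier G \<and> aX (rep (aX g x0)) x0 = aX g x0"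
      unfolding rep_def by (rule someI[of _ g]) (simp add: g)
    moreover have "f z \<in> topspace Y" using Z(3) z continuous_map_image_subset_topspace by blast
    ultimately show ?thesis
      unfolding F_def using stabilizer_fixed_act_eq[OF X(1,3) Y _ fixed[OF z], of "rep (aX g x0)" g] g
      by simp
  qed
  let ?O = "subtopology X (G_orbit G aX x0)"
  have "continuous_map (prod_topology Z ?O) Y F"
  proof (rule continuous_map_through_quotient[where K = "prod_topology Z TG"
        and q = "\<lambda>(z, g). (z, aX g x0)" and g = "\<lambda>w. aY (snd w) (f (fst w))"])
    show "compact_space (prod_topology Z TG)"
      using Z(1) compact_TG by (simp add: compact_space_prod_topology)
    show "Hausdorff_space (prod_topology Z ?O)"
      using Z(2) X(2) by (simp add: Hausdorff_space_prod_topology Hausdorff_space_subtopology)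
    have orbit: "(\<lambda>g. aX g x0) ` topspace TG = topspace ?O"
      using G_orbit_subset_topspace[OF X(1,3)] unfolding G_orbit_def topspace_TG by auto
    then have "continuous_map TG ?O (\<lambda>g. aX g x0)"
      using continuous_map_orbit[OF X(1,3)] by (auto simp: continuous_map_in_subtopology)
    then show "continuous_map (prod_topology Z TG) (prod_topology Z ?O) (\<lambda>(z, g). (z, aX g x0))"
      by (simp add: continuous_map_prod_top)
    show "(\<lambda>(z, g). (z, aX g x0)) ` topspace (prod_topology Z TG) = topspace (prod_topology Z ?O)"
      using orbit by (simp add: image_paired_Times)
    show "continuous_map (prod_topology Z TG) Y (\<lambda>w. aY (snd w) (f (fst w)))"
      using G_space_continuous_action[OF Y continuous_map_snd continuous_map_compose[OF continuous_map_fst Z(3)]]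
      by (simp add: o_def)
    show "F ((\<lambda>(z, g). (z, aX g x0)) w) = aY (snd w) (f (fst w))"
      if "w \<in> topspace (prod_topology Z TG)" for w
      using F that by (auto simp: topspace_TG)
  qed
  then show thesis using F that by blast
qed

lemma equivariant_orbit_extension:
  assumes X: "G_space G TG X aX" "x0 \<in> topspace X" and Y: "G_space G TG Y aY" "y \<in> topspace Y"
    and F: "\<And>g. g \<in> carrier G \<Longrightarrow> F (aX g x0) = aY g y"
  shows "equivariant G (subtopology X (G_orbit G aX x0)) aX aY F"
  unfolding equivariant_def
proof (intro ballI)
  interpret group G by (rule group)
  fix g x assume g: "g \<in> carrier G" and x: "x \<in> topspace (subtopology X (G_orbit G aX x0))"
  then obtain k where k: "k \<in> carrier G" "x = aX k x0" unfolding G_orbit_def by auto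
  have "F (aX g x) = F (aX (g \<otimes> k) x0)" using G_space_act_mult[OF X(1) g k(1) X(2)] k by simp
  also have "\<dots> = aY g (aY k y)" using F[of "g \<otimes> k"] G_space_act_mult[OF Y(1) g k(1) Y(2)] g k by simp
  also have "\<dots> = aY g (F x)" using F k by simp
  finally show "F (aX g x) = aY g (F x)" .
qed

lemma orbit_map_extension:
  assumes X: "G_space G TG X aX" "Hausdorff_space X" "x0 \<in> topspace X"
    and Y: "G_space G TG Y aY" "y \<in> topspace Y"
    and fixed: "\<And>h. h \<in> stabilizer G aX x0 \<Longrightarrow> aY h y = y"
  obtains \<phi> where "G_map G (subtopology X (G_orbit G aX x0)) aX Y aY \<phi>"
    "\<And>g. g \<in> carrier G \<Longrightarrow> \<phi> (aX g x0) = aY g y"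
proof -
  let ?P = "top_of_set {0::real}" and ?O = "subtopology X (G_orbit G aX x0)"
  have P: "compact_space ?P" "Hausdorff_space ?P" "continuous_map ?P Y (\<lambda>_. y)"
    using Y(2) by (simp_all add: compact_space_subtopology Hausdorff_space_subtopology)
  obtain F where F: "continuous_map (prod_topology ?P ?O) Y F"
      "\<And>z g. z \<in> topspace ?P \<Longrightarrow> g \<in> carrier G \<Longrightarrow> F (z, aX g x0) = aY g y"
    using orbit_extension[OF X Y(1) P fixed] by blast
  have "continuous_map ?O (prod_topology ?P ?O) (\<lambda>x. (0, x))"
    by (rule continuous_map_pairedI) simp_all
  then have "continuous_map ?O Y (\<lambda>x. F (0, x))"
    using continuous_map_compose[OF _ F(1)] by (simp add: o_def)
  moreover have "equivariant G ?O aX aY (\<lambda>x. F (0, x))"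
    using equivariant_orbit_extension[OF X(1,3) Y] F(2) by simp
  ultimately show thesis using that F(2) unfolding G_map_def by simp
qed

lemma orbit_G_homotopic_to_fixed_point:
  fixes X :: "'x topology"
  assumes X: "G_space G TG X a" "Hausdorff_space X" "x0 \<in> topspace X"
    and b0: "b0 \<in> fixed_set X a (carrier G)"
    and conn: "path_connectedin X (fixed_set X a (stabilizer G a x0))"
  shows "G_homotopic G (subtopology X (G_orbit G a x0)) a X a id (\<lambda>_. b0)"
proof -
  let ?I = "top_of_set {0..1::real}" and ?O = "subtopology X (G_orbit G a x0)"
  have "x0 \<in> fixed_set X a (stabilizer G a x0)" "b0 \<in> fixed_set X a (stabilizer G a x0)"
    using X(3) b0 unfolding fixed_set_def stabilizer_def by auto
  then obtain \<gamma> where \<gamma>: "pathin X \<gamma>" "\<gamma> \<in> {0..1} \<rightarrow> fixed_set X a (stabilizer G a x0)"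
      "\<gamma> 0 = x0" "\<gamma> 1 = b0"
    using conn unfolding path_connectedin by blast
  have \<gamma>X: "\<gamma> t \<in> topspace X" if "t \<in> {0..1}" for t
    using \<gamma>(2) that unfolding fixed_set_def by auto
  have "compact_space ?I" "Hausdorff_space ?I"
    by (simp_all add: compact_space_subtopology Hausdorff_space_subtopology)
  moreover have "a h (\<gamma> t) = \<gamma> t" if "t \<in> {0..1}" "h \<in> stabilizer G a x0" for t h
    using \<gamma>(2) that unfolding fixed_set_def by auto
  ultimately obtain F where F: "continuous_map (prod_topology ?I ?O) X F"
      "\<And>t g. t \<in> {0..1} \<Longrightarrow> g \<in> carrier G \<Longrightarrow> F (t, a g x0) = a g (\<gamma> t)"
    using orbit_extension[OF X X(1), of ?I \<gamma>] \<gamma>(1) unfolding pathin_def by auto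
  have hom: "homotopic_with (equivariant G ?O a a) ?O X (\<lambda>x. F (0, x)) (\<lambda>x. F (1, x))"
    unfolding homotopic_with_def
  proof (intro exI[of _ F] conjI allI ballI F(1) refl)
    fix t :: real assume t: "t \<in> {0..1}"
    show "equivariant G ?O a a (\<lambda>x. F (t, x))"
      by (rule equivariant_orbit_extension[OF X(1,3) X(1) \<gamma>X[OF t]]) (rule F(2)[OF t])
  qed
  have orbit: "topspace ?O = G_orbit G a x0" "invariant_set G X a (G_orbit G a x0)"
    using G_orbit_subset_topspace[OF X(1,3)] invariant_set_G_orbit[OF X(1,3)] by auto
  show ?thesis
    unfolding G_homotopic_def
  proof (rule homotopic_with_eq[OF hom])
    fix x assume "x \<in> topspace ?O"
    then obtain g where "g \<in> carrier G" "x = a g x0" unfolding orbit G_orbit_def by auto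
    then show "id x = F (0, x)" "b0 = F (1, x)"
      using F(2) \<gamma>(3,4) b0 unfolding fixed_set_def by auto
  next
    fix h k :: "'x \<Rightarrow> 'x" assume "\<And>x. x \<in> topspace ?O \<Longrightarrow> h x = k x"
    moreover have "a g x \<in> topspace ?O" if "g \<in> carrier G" "x \<in> topspace ?O" for g x
      using orbit that unfolding invariant_set_def by auto
    ultimately show "equivariant G ?O a a h \<longleftrightarrow> equivariant G ?O a a k"
      using equivariant_cong[of G ?O a a h k] equivariant_cong[of G ?O a a k h] by auto
  qed
qed

lemma has_G_local_section_if_fixed_points_lift:
  assumes E: "G_space G TG E aE" and B: "G_space G TG B aB" "Hausdorff_space B"
    and p: "G_map G E aE B aB p"
    and lift: "\<And>H. closed_subgroup G TG H \<Longrightarrow> fixed_set B aB H \<subseteq> p ` fixed_set E aE H"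
    and U: "G_categorical G B aB U"
  shows "has_G_local_section G E aE B aB p U"
proof -
  obtain c x0 where x0: "x0 \<in> topspace B" and c: "c ` U \<subseteq> G_orbit G aB x0"
      "G_homotopic G (subtopology B U) aB B aB id c"
      "G_map G (subtopology B U) aB (subtopology B (G_orbit G aB x0)) aB c"
    by (rule G_categorical_obtains_orbit_map[OF U])
  have "x0 \<in> fixed_set B aB (stabilizer G aB x0)"
    using x0 unfolding fixed_set_def stabilizer_def by auto
  then obtain y0 where y0: "y0 \<in> fixed_set E aE (stabilizer G aB x0)" "p y0 = x0"
    using lift[OF closed_subgroup_stabilizer[OF B(1) Hausdorff_imp_t1_space[OF B(2)] x0]] by blast
  have y0E: "y0 \<in> topspace E" and y0_fixed: "\<And>h. h \<in> stabilizer G aB x0 \<Longrightarrow> aE h y0 = y0"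
    using y0(1) unfolding fixed_set_def by auto
  obtain \<phi> where \<phi>: "G_map G (subtopology B (G_orbit G aB x0)) aB E aE \<phi>"
      "\<And>g. g \<in> carrier G \<Longrightarrow> \<phi> (aB g x0) = aE g y0"
    using orbit_map_extension[OF B x0 E y0E y0_fixed] by blast
  define s where "s = \<phi> \<circ> c"
  have s: "G_map G (subtopology B U) aB E aE s"
    unfolding s_def by (rule G_map_compose[OF c(3) \<phi>(1)])
  have "(p \<circ> s) u = c u" if u: "u \<in> topspace (subtopology B U)" for u
  proof -
    obtain g where g: "g \<in> carrier G" "c u = aB g x0" using c(1) u unfolding G_orbit_def by auto
    have "p (aE g y0) = aB g (p y0)" using p g y0E unfolding G_map_def equivariant_def by blast
    then show ?thesis using g \<phi>(2) y0(2) unfolding s_def by simp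
  qed
  moreover have "G_map G (subtopology B U) aB B aB (p \<circ> s)" by (rule G_map_compose[OF s p])
  moreover have "equivariant G (subtopology B U) aB aB c" using c(3) unfolding G_map_def by simp
  ultimately have "G_homotopic G (subtopology B U) aB B aB (p \<circ> s) c"
    unfolding G_homotopic_def G_map_def by (intro homotopic_with_equal) auto
  then have "G_homotopic G (subtopology B U) aB B aB (p \<circ> s) id"
    using G_homotopic_trans G_homotopic_sym[OF c(2)] by blast
  then show ?thesis
    using U s unfolding has_G_local_section_def G_categorical_def by blast
qed

lemma has_G_local_section_if_G_fixed_point:
  assumes E: "G_space G TG E aE" and B: "G_space G TG B aB" "Hausdorff_space B"
    and p: "G_map G E aE B aB p"
    and B_connected: "G_connected G TG B aB" and e0: "e0 \<in> fixed_set E aE (carrier G)"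
    and U: "G_categorical G B aB U"
  shows "has_G_local_section G E aE B aB p U"
proof -
  obtain c x0 where x0: "x0 \<in> topspace B" and "c ` U \<subseteq> G_orbit G aB x0"
      and c: "G_homotopic G (subtopology B U) aB B aB id c"
      "G_map G (subtopology B U) aB (subtopology B (G_orbit G aB x0)) aB c"
    by (rule G_categorical_obtains_orbit_map[OF U])
  have e0E: "e0 \<in> topspace E" and e0_fixed: "\<And>g. g \<in> carrier G \<Longrightarrow> aE g e0 = e0"
    using e0 unfolding fixed_set_def by auto
  have "p e0 \<in> topspace B"
    using p e0E continuous_map_image_subset_topspace unfolding G_map_def by blast
  moreover have "aB g (p e0) = p e0" if "g \<in> carrier G" for g
    using p e0E e0_fixed[OF that] that unfolding G_map_def equivariant_def by metis
  ultimately have "p e0 \<in> fixed_set B aB (carrier G)" unfolding fixed_set_def by blast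
  moreover have "path_connectedin B (fixed_set B aB (stabilizer G aB x0))"
    using B_connected closed_subgroup_stabilizer[OF B(1) Hausdorff_imp_t1_space[OF B(2)] x0]
    unfolding G_connected_def by blast
  ultimately have "G_homotopic G (subtopology B (G_orbit G aB x0)) aB B aB id (\<lambda>_. p e0)"
    by (rule orbit_G_homotopic_to_fixed_point[OF B x0])
  then have "G_homotopic G (subtopology B U) aB B aB (id \<circ> c) ((\<lambda>_. p e0) \<circ> c)"
    by (rule G_homotopic_compose_right[OF _ c(2)])
  then have "G_homotopic G (subtopology B U) aB B aB id (\<lambda>_. p e0)"
    using G_homotopic_trans[OF c(1)] by (simp add: o_def)
  then have "G_homotopic G (subtopology B U) aB B aB (p \<circ> (\<lambda>_. e0)) id"
    by (simp add: G_homotopic_sym o_def)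
  moreover have "G_map G (subtopology B U) aB E aE (\<lambda>_. e0)"
    unfolding G_map_def equivariant_def using e0E e0_fixed by simp
  ultimately show ?thesis
    using U unfolding has_G_local_section_def G_categorical_def by blast
qed

lemma has_G_local_section_if_G_categorical:
  assumes E: "G_space G TG E aE" and B: "G_space G TG B aB" "Hausdorff_space B"
    and p: "G_map G E aE B aB p"
    and hyp: "(G_connected G TG B aB \<and> fixed_set E aE (carrier G) \<noteq> {})
      \<or> (\<forall>H. closed_subgroup G TG H \<longrightarrow> p ` fixed_set E aE H = fixed_set B aB H)"
    and U: "G_categorical G B aB U"
  shows "has_G_local_section G E aE B aB p U"
  using hyp
proof
  assume "G_connected G TG B aB \<and> fixed_set E aE (carrier G) \<noteq> {}"
  then obtain e0 where "G_connected G TG B aB" "e0 \<in> fixed_set E aE (carrier G)" by blast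
  then show ?thesis by (rule has_G_local_section_if_G_fixed_point[OF E B p _ _ U])
next
  assume "\<forall>H. closed_subgroup G TG H \<longrightarrow> p ` fixed_set E aE H = fixed_set B aB H"
  then have "\<And>H. closed_subgroup G TG H \<Longrightarrow> fixed_set B aB H \<subseteq> p ` fixed_set E aE H" by simp
  then show ?thesis by (rule has_G_local_section_if_fixed_points_lift[OF E B p _ U])
qed

end

theorem corollary4p7:
  fixes G :: "'g monoid" and TG :: "'g topology"
    and E :: "'e topology" and aE :: "'g \<Rightarrow> 'e \<Rightarrow> 'e"
    and B :: "'b topology" and aB :: "'g \<Rightarrow> 'b \<Rightarrow> 'b"
    and p :: "'e \<Rightarrow> 'b"
  assumes "compact_Hausdorff_group G TG"
    and "G_space G TG E aE" and "Hausdorff_space E"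
    and "G_space G TG B aB" and "Hausdorff_space B"
    and "G_map G E aE B aB p"
    and "G_cat G E aE = 1"
    and "(G_connected G TG B aB \<and> fixed_set E aE (carrier G) \<noteq> {})
         \<or> (\<forall>H. closed_subgroup G TG H \<longrightarrow> p ` fixed_set E aE H = fixed_set B aB H)"
  shows "G_secat G E aE B aB p = G_cat G B aB"
proof (rule G_secat_eq_G_cat_if)
  have "group G" "topspace TG = carrier G" "compact_space TG"
    using assms(1) unfolding compact_Hausdorff_group_def topological_group_def by auto
  then interpret compact_group G TG by (rule compact_group.intro)
  obtain c e0 where contraction: "e0 \<in> topspace E" "c ` topspace E \<subseteq> G_orbit G aE e0"
      "G_homotopic G E aE E aE id c"
    by (rule G_cat_eq_1_obtains_contraction[OF assms(7)])
  fix V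
  show "has_G_local_section G E aE B aB p V \<longleftrightarrow> G_categorical G B aB V"
    using G_categorical_if_has_G_local_section[OF contraction assms(6)]
      has_G_local_section_if_G_categorical[OF assms(2,4,5,6,8)] by blast
qed

end
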